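(* Let $R=(v_1,\dots,v_\ell)$ be a route, $\bar y\in\mathbb{R}^{[N]\times V_+}_{\ge0}$ and $\xi\in[N]$. There exist $f\in\mathbb{R}^A_{\ge0}$ and $g\in\mathbb{R}^{V_+}_{\ge0}$ satisfying $f_{(v_{i-1},v_i)}+d^\xi(v_i)=f_{(v_i,v_{i+1})}+g_{v_i}$ for all $i\in[\ell]$, $f_{(v_{i-1},v_i)}\le C$ for all $i\in[\ell+1]$, and $g_{v_i}\le C\,\bar y^\xi_{v_i}$ for all $i\in[\ell]$, if and only if $$\bar y^\xi(R')\ge\frac{d^\xi(R')}{C}-1\quad\text{for all subroutes } R'\subseteq R.$$
   Context: $G=(V,E)$ complete undirected graph with $V=\{0\}\cup V_+$ ($0$ depot, $V_+$ customers); $D=(V,A)$ replaces each edge by two opposite arcs. Capacity $C\in\mathbb{Q}_{>0}$; scenarios $\xi\in[N]$ with demand vectors $d^\xi\in\mathbb{Q}^{V_+}_{\ge0}$, $d^\xi(v)\le C$. A route $R=(v_1,\dots,v_\ell)$ is the cycle $0,v_1,\dots,v_\ell,0$ through distinct customers, $V_+(R)=\{v_1,\dots,v_\ell\}$, $v_0=v_{\ell+1}=0$. A subroute of $R$ is $R'=(v_i,\dots,v_j)$ with $1\le i\le j\le\ell$. For a vector $f$, $f(S)=\sum_{i\in S}f(i)$; $\bar y^\xi(R')=\sum_{v\in V_+(R')}\bar y^\xi_v$ and $d^\xi(R')=d^\xi(V_+(R'))$. *)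

theory Defs
  imports Complex_Main
begin

text \<open>Vertices are natural numbers; the depot is 0; V is the finite vertex set
  of the complete graph, customers are V - {0}. Arcs of D are ordered pairs of
  distinct vertices.\<close>

definition customers :: "nat set \<Rightarrow> nat set" where
  "customers V = V - {0}"

definition arcs :: "nat set \<Rightarrow> (nat \<times> nat) set" where
  "arcs V = {(u, v). u \<in> V \<and> v \<in> V \<and> u \<noteq> v}"

definition is_route :: "nat set \<Rightarrow> nat list \<Rightarrow> bool" where
  "is_route V R \<longleftrightarrow> R \<noteq> [] \<and> distinct R \<and> set R \<subseteq> customers V"

text \<open>node R i = v_i, with v_0 = v_(l+1) = 0 (the depot).\<close>
definition node :: "nat list \<Rightarrow> nat \<Rightarrow> nat" where
  "node R i = (if i = 0 \<or> i > length R then 0 else R ! (i - 1))"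

definition subroute_set :: "nat list \<Rightarrow> nat \<Rightarrow> nat \<Rightarrow> nat set" where
  "subroute_set R i j = node R ` {i..j}"

end

theory Submission
  imports Defs
begin

(* Write phi_i for the flow on the arc (v_(i-1), v_i). Flow conservation telescopes along a
   subroute R' = (v_i, ..., v_j): phi_i + d(R') = phi_(j+1) + g(R'), so 0 <= phi <= C and
   g <= C ybar give d(R') <= C + C ybar(R'). Conversely, with a_k = d(v_k) - C ybar_(v_k), the
   Lindley recursion F_0 = 0, F_k = max 0 (F_(k-1) + a_k) equals the largest suffix sum of
   a_1, ..., a_k (or 0), hence stays in [0, C] under the subroute condition, and the unloaded
   amounts g_(v_k) = F_(k-1) + d(v_k) - F_k lie in [0, C ybar_(v_k)]. *)

(* Flows along a path with l customers, indexed by position: phi i is the flow on the arc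
   entering the i-th customer (phi (l+1) on the arc back to the depot), G i is unloaded there. *)
definition path_flow ::
    "real \<Rightarrow> (nat \<Rightarrow> real) \<Rightarrow> (nat \<Rightarrow> real) \<Rightarrow> nat \<Rightarrow> (nat \<Rightarrow> real) \<Rightarrow> (nat \<Rightarrow> real) \<Rightarrow> bool"
  where
  "path_flow C D c l phi G \<longleftrightarrow>
     (\<forall>i\<in>{1..l+1}. 0 \<le> phi i \<and> phi i \<le> C) \<and>
     (\<forall>i\<in>{1..l}. phi i + D i = phi (Suc i) + G i \<and> 0 \<le> G i \<and> G i \<le> c i)"

lemma sum_balance_telescope:
  fixes phi D G :: "nat \<Rightarrow> 'a::ab_group_add"
  assumes "\<And>m. m \<in> {i..j} \<Longrightarrow> phi m + D m = phi (Suc m) + G m" and "i \<le> Suc j"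
  shows "phi i + (\<Sum>m=i..j. D m) = phi (Suc j) + (\<Sum>m=i..j. G m)"
proof -
  have "(\<Sum>m=i..j. D m - G m) = (\<Sum>m=i..j. phi (Suc m) - phi m)"
    using assms(1) by (intro sum.cong) (auto simp: algebra_simps)
  also have "\<dots> = phi (Suc j) - phi i"
    using assms(2) by (rule sum_Suc_diff)
  finally show ?thesis by (simp add: sum_subtractf algebra_simps)
qed

lemma path_flow_segment_bound:
  assumes "path_flow C D c l phi G" and "1 \<le> i" "i \<le> j" "j \<le> l"
  shows "(\<Sum>m=i..j. D m) \<le> C + (\<Sum>m=i..j. c m)"
proof -
  have flow: "\<forall>i\<in>{1..l+1}. 0 \<le> phi i \<and> phi i \<le> C"
    and node: "\<forall>i\<in>{1..l}. phi i + D i = phi (Suc i) + G i \<and> 0 \<le> G i \<and> G i \<le> c i"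
    using assms(1) by (auto simp: path_flow_def)
  have "phi i + (\<Sum>m=i..j. D m) = phi (Suc j) + (\<Sum>m=i..j. G m)"
    using node assms(2-4) by (intro sum_balance_telescope) auto
  moreover have "0 \<le> phi i" "phi (Suc j) \<le> C"
    using flow assms(2-4) by auto
  moreover have "(\<Sum>m=i..j. G m) \<le> (\<Sum>m=i..j. c m)"
    using node assms(2-4) by (intro sum_mono) auto
  ultimately show ?thesis by linarith
qed

fun greedy_flow :: "(nat \<Rightarrow> real) \<Rightarrow> nat \<Rightarrow> real" where
  "greedy_flow a 0 = 0"
| "greedy_flow a (Suc k) = max 0 (greedy_flow a k + a (Suc k))"

lemma greedy_flow_nonneg: "0 \<le> greedy_flow a k"
  by (cases k) auto

lemma greedy_flow_eq_suffix_sum: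
  "\<exists>i. 1 \<le> i \<and> i \<le> Suc k \<and> greedy_flow a k = (\<Sum>m=i..k. a m)"
proof (induction k)
  case 0
  show ?case by (intro exI[of _ 1]) auto
next
  case (Suc k)
  then obtain i where i: "1 \<le> i" "i \<le> Suc k" "greedy_flow a k = (\<Sum>m=i..k. a m)"
    by blast
  show ?case
  proof (cases "greedy_flow a k + a (Suc k) \<le> 0")
    case True
    then show ?thesis by (intro exI[of _ "Suc (Suc k)"]) auto
  next
    case False
    then show ?thesis
      using i by (intro exI[of _ i]) (simp add: atLeastAtMostSuc_conv)
  qed
qed

lemma greedy_flow_le:
  assumes "0 \<le> C" and "\<And>i. 1 \<le> i \<Longrightarrow> i \<le> k \<Longrightarrow> (\<Sum>m=i..k. a m) \<le> C"
  shows "greedy_flow a k \<le> C"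
proof -
  obtain i where "1 \<le> i" "i \<le> Suc k" "greedy_flow a k = (\<Sum>m=i..k. a m)"
    using greedy_flow_eq_suffix_sum by blast
  then show ?thesis
    using assms by (cases "i = Suc k") auto
qed

lemma path_flow_greedy:
  assumes "0 \<le> C" and D: "\<forall>i\<in>{1..l}. 0 \<le> D i" and c: "\<forall>i\<in>{1..l}. 0 \<le> c i"
    and bound: "\<And>i j. 1 \<le> i \<Longrightarrow> i \<le> j \<Longrightarrow> j \<le> l \<Longrightarrow> (\<Sum>m=i..j. D m) \<le> C + (\<Sum>m=i..j. c m)"
  defines "F \<equiv> greedy_flow (\<lambda>m. D m - c m)"
  shows "path_flow C D c l (\<lambda>i. F (i - 1)) (\<lambda>i. F (i - 1) + D i - F i)"
  unfolding path_flow_def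
proof (intro conjI ballI)
  fix i assume i: "i \<in> {1..l+1}"
  show "0 \<le> F (i - 1)"
    by (simp add: F_def greedy_flow_nonneg)
  have "(\<Sum>m=i'..i-1. D m - c m) \<le> C" if "1 \<le> i'" "i' \<le> i - 1" for i'
    using bound[of i' "i - 1"] that i by (force simp: sum_subtractf)
  then show "F (i - 1) \<le> C"
    unfolding F_def by (rule greedy_flow_le[OF \<open>0 \<le> C\<close>])
next
  fix i assume i: "i \<in> {1..l}"
  then obtain k where k: "i = Suc k" by (cases i) auto
  have step: "F i = max 0 (F (i - 1) + D i - c i)"
    by (simp add: F_def k)
  show "F (i - 1) + D i = F (Suc i - 1) + (F (i - 1) + D i - F i)"
    by simp
  show "0 \<le> F (i - 1) + D i - F i"
    using step D c i F_def greedy_flow_nonneg by auto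
  show "F (i - 1) + D i - F i \<le> c i"
    using step by simp
qed

lemma path_flow_iff_segment_bound:
  assumes "0 \<le> C" and "\<forall>i\<in>{1..l}. 0 \<le> D i" and "\<forall>i\<in>{1..l}. 0 \<le> c i"
  shows "(\<exists>phi G. path_flow C D c l phi G) \<longleftrightarrow>
         (\<forall>i j. 1 \<le> i \<and> i \<le> j \<and> j \<le> l \<longrightarrow> (\<Sum>m=i..j. D m) \<le> C + (\<Sum>m=i..j. c m))"
  using path_flow_segment_bound path_flow_greedy[OF assms] by blast

lemma node_Suc_length [simp]: "node R (Suc (length R)) = 0"
  by (simp add: node_def)

lemma set_eq_node_image: "set R = node R ` {1..length R}"
proof -
  have "node R ` {1..length R} = node R ` Suc ` {..<length R}"
    by (simp add: image_Suc_lessThan)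
  also have "\<dots> = (\<lambda>i. R ! i) ` {..<length R}"
    unfolding image_image by (intro image_cong) (auto simp: node_def)
  finally show ?thesis
    by (auto simp: set_conv_nth)
qed

lemma inj_on_node: "distinct R \<Longrightarrow> inj_on (node R) {1..length R}"
  by (auto simp: inj_on_def node_def nth_eq_iff_index_eq)

lemma node_in_customers:
  "is_route V R \<Longrightarrow> i \<in> {1..length R} \<Longrightarrow> node R i \<in> customers V"
  using set_eq_node_image[of R] by (auto simp: is_route_def)

lemma node_eq_0_iff:
  assumes "is_route V R"
  shows "node R i = 0 \<longleftrightarrow> i \<notin> {1..length R}"
  using node_in_customers[OF assms, of i] by (auto simp: node_def customers_def)

lemma node_in_vertices: "is_route V R \<Longrightarrow> 0 \<in> V \<Longrightarrow> node R i \<in> V"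
  using node_in_customers node_eq_0_iff by (metis Diff_iff customers_def)

lemma route_arc:
  assumes route: "is_route V R" and "0 \<in> V" and i: "i \<in> {1..length R + 1}"
  shows "(node R (i - 1), node R i) \<in> arcs V"
proof -
  have "node R (i - 1) \<noteq> node R i"
  proof (cases "i - 1 \<in> {1..length R} \<and> i \<in> {1..length R}")
    case True
    have "inj_on (node R) {1..length R}"
      using route by (intro inj_on_node) (simp add: is_route_def)
    moreover have "i - 1 \<noteq> i"
      using i by auto
    ultimately show ?thesis
      using True by (meson inj_onD)
  next
    case False
    have "0 < length R"
      using route by (simp add: is_route_def)
    moreover have "i = 1 \<or> i = Suc (length R)"
      using False i by auto
    ultimately show ?thesis
      using node_eq_0_iff[OF route, of "i - 1"] node_eq_0_iff[OF route, of i] by (auto simp: Suc_le_eq)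
  qed
  then show ?thesis
    using node_in_vertices[OF route \<open>0 \<in> V\<close>] by (simp add: arcs_def)
qed

lemma sum_subroute_set:
  assumes "distinct R" "1 \<le> i" "j \<le> length R"
  shows "(\<Sum>v\<in>subroute_set R i j. h v) = (\<Sum>m=i..j. h (node R m))"
proof -
  have "inj_on (node R) {i..j}"
    by (rule inj_on_subset[OF inj_on_node[OF assms(1)]]) (use assms in auto)
  then show ?thesis
    by (simp add: subroute_set_def sum.reindex)
qed

(* Position of a vertex on the route; the depot (and every vertex off the route) gets the
   position length R + 1 of the final arc. *)
definition route_pos :: "nat list \<Rightarrow> nat \<Rightarrow> nat" where
  "route_pos R v =
     (if v \<in> set R then the_inv_into {1..length R} (node R) v else Suc (length R))"

lemma route_pos_node:
  assumes "distinct R" "0 \<notin> set R" "i \<in> {1..length R + 1}"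
  shows "route_pos R (node R i) = i"
proof (cases "i = Suc (length R)")
  case True
  then show ?thesis
    using assms(2) by (simp add: route_pos_def)
next
  case False
  with assms(3) have i: "i \<in> {1..length R}" by auto
  then have "the_inv_into {1..length R} (node R) (node R i) = i"
    using inj_on_node[OF assms(1)] by (intro the_inv_into_f_f)
  then show ?thesis
    using i set_eq_node_image[of R] by (simp add: route_pos_def)
qed

lemma route_pos_range:
  assumes "distinct R"
  shows "route_pos R v \<in> {1..length R + 1}"
proof (cases "v \<in> set R")
  case True
  then have "the_inv_into {1..length R} (node R) v \<in> {1..length R + 1}"
    using set_eq_node_image[of R] by (intro the_inv_into_into[OF inj_on_node[OF assms]]) auto
  then show ?thesis
    using True by (simp add: route_pos_def)
qed (simp add: route_pos_def)

lemma arc_flow_iff_path_flow: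
  fixes D c :: "nat \<Rightarrow> real"
  assumes route: "is_route V R" and "0 \<in> V"
  shows "(\<exists>f :: nat \<times> nat \<Rightarrow> real. \<exists>g :: nat \<Rightarrow> real.
            (\<forall>a\<in>arcs V. f a \<ge> 0) \<and> (\<forall>v\<in>customers V. g v \<ge> 0) \<and>
            (\<forall>i\<in>{1..length R}.
               f (node R (i - 1), node R i) + D (node R i)
                 = f (node R i, node R (i + 1)) + g (node R i)) \<and>
            (\<forall>i\<in>{1..length R + 1}. f (node R (i - 1), node R i) \<le> C) \<and>
            (\<forall>i\<in>{1..length R}. g (node R i) \<le> c (node R i)))
         \<longleftrightarrow> (\<exists>phi G. path_flow C (\<lambda>i. D (node R i)) (\<lambda>i. c (node R i)) (length R) phi G)"
    (is "?arc \<longleftrightarrow> ?path")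
proof
  assume ?arc
  then obtain f g where
    f: "\<forall>a\<in>arcs V. f a \<ge> 0" "\<forall>i\<in>{1..length R + 1}. f (node R (i - 1), node R i) \<le> C"
    and g: "\<forall>v\<in>customers V. g v \<ge> 0" "\<forall>i\<in>{1..length R}. g (node R i) \<le> c (node R i)"
    and balance: "\<forall>i\<in>{1..length R}. f (node R (i - 1), node R i) + D (node R i)
                                      = f (node R i, node R (i + 1)) + g (node R i)"
    by blast
  have "path_flow C (\<lambda>i. D (node R i)) (\<lambda>i. c (node R i)) (length R)
          (\<lambda>i. f (node R (i - 1), node R i)) (\<lambda>i. g (node R i))"
    using f g balance route_arc[OF route \<open>0 \<in> V\<close>] node_in_customers[OF route]
    by (auto simp: path_flow_def)
  then show ?path by blast
next
  assume ?path
  then obtain phi G where flow: "path_flow C (\<lambda>i. D (node R i)) (\<lambda>i. c (node R i)) (length R) phi G"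
    by blast
  have "distinct R" "0 \<notin> set R"
    using route by (auto simp: is_route_def customers_def)
  note pos_node = route_pos_node[OF this] and pos_range = route_pos_range[OF \<open>distinct R\<close>]
  have phi: "\<forall>i\<in>{1..length R + 1}. 0 \<le> phi i \<and> phi i \<le> C"
    and balance: "\<forall>i\<in>{1..length R}. phi i + D (node R i) = phi (Suc i) + G i \<and> 0 \<le> G i \<and> G i \<le> c (node R i)"
    using flow by (simp_all add: path_flow_def)
  define f :: "nat \<times> nat \<Rightarrow> real" where "f = (\<lambda>(u, v). phi (route_pos R v))"
  define g where "g v = (if v \<in> set R then G (route_pos R v) else 0)" for v
  have f_node: "f (node R (i - 1), node R i) = phi i" if "i \<in> {1..length R + 1}" for i
    using pos_node[OF that] by (simp add: f_def)
  have g_node: "g (node R i) = G i" if "i \<in> {1..length R}" for i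
    using pos_node[of i] that set_eq_node_image[of R] by (simp add: g_def)
  have "0 \<le> f a" for a
    using phi pos_range by (simp add: f_def split: prod.splits)
  moreover have "0 \<le> g v" for v
  proof (cases "v \<in> set R")
    case True
    then obtain i where "i \<in> {1..length R}" "v = node R i"
      using set_eq_node_image[of R] by auto
    then show ?thesis
      using g_node balance by auto
  qed (simp add: g_def)
  moreover have "f (node R i, node R (i + 1)) = phi (Suc i)" if "i \<in> {1..length R}" for i
    using f_node[of "Suc i"] that by simp
  ultimately show ?arc
    using phi balance f_node g_node by (intro exI[of _ f] exI[of _ g]) auto
qed

theorem lemma2:
  fixes V :: "nat set" and N :: nat and C :: real
    and d :: "nat \<Rightarrow> nat \<Rightarrow> real"   \<comment> \<open>d \<xi> v = d^\<xi>(v)\<close>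
    and ybar :: "nat \<Rightarrow> nat \<Rightarrow> real" \<comment> \<open>ybar \<xi> v = ybar^\<xi>_v\<close>
    and R :: "nat list" and \<xi> :: nat
  assumes finV: "finite V" and depot: "0 \<in> V"
    and Cpos: "C > 0" and Crat: "C \<in> \<rat>"
    and d_rat: "\<forall>s\<in>{1..N}. \<forall>v\<in>customers V. d s v \<in> \<rat>"
    and d_nonneg: "\<forall>s\<in>{1..N}. \<forall>v\<in>customers V. d s v \<ge> 0"
    and d_le_C: "\<forall>s\<in>{1..N}. \<forall>v\<in>customers V. d s v \<le> C"
    and route: "is_route V R"
    and y_nonneg: "\<forall>s\<in>{1..N}. \<forall>v\<in>customers V. ybar s v \<ge> 0"
    and xi: "\<xi> \<in> {1..N}"
  shows "(\<exists>f :: nat \<times> nat \<Rightarrow> real. \<exists>g :: nat \<Rightarrow> real.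
            (\<forall>a\<in>arcs V. f a \<ge> 0) \<and> (\<forall>v\<in>customers V. g v \<ge> 0) \<and>
            (\<forall>i\<in>{1..length R}.
               f (node R (i - 1), node R i) + d \<xi> (node R i)
                 = f (node R i, node R (i + 1)) + g (node R i)) \<and>
            (\<forall>i\<in>{1..length R + 1}. f (node R (i - 1), node R i) \<le> C) \<and>
            (\<forall>i\<in>{1..length R}. g (node R i) \<le> C * ybar \<xi> (node R i)))
         \<longleftrightarrow>
         (\<forall>i j. 1 \<le> i \<and> i \<le> j \<and> j \<le> length R \<longrightarrow>
            (\<Sum>v\<in>subroute_set R i j. ybar \<xi> v)
              \<ge> (\<Sum>v\<in>subroute_set R i j. d \<xi> v) / C - 1)"
proof -
  have "distinct R" and C_nonneg: "0 \<le> C"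
    and d_route_nonneg: "\<forall>i\<in>{1..length R}. 0 \<le> d \<xi> (node R i)"
    and c_route_nonneg: "\<forall>i\<in>{1..length R}. 0 \<le> C * ybar \<xi> (node R i)"
    using route Cpos d_nonneg y_nonneg xi node_in_customers[OF route] by (auto simp: is_route_def)
  have "a \<le> C + C * b \<longleftrightarrow> b \<ge> a / C - 1" for a b
    using Cpos by (simp add: field_simps)
  then have "(\<Sum>m=i..j. d \<xi> (node R m)) \<le> C + (\<Sum>m=i..j. C * ybar \<xi> (node R m))
          \<longleftrightarrow> (\<Sum>m=i..j. ybar \<xi> (node R m)) \<ge> (\<Sum>m=i..j. d \<xi> (node R m)) / C - 1"
    for i j
    by (simp flip: sum_distrib_left)
  then have segment_bound_iff:
    "(\<forall>i j. 1 \<le> i \<and> i \<le> j \<and> j \<le> length R \<longrightarrow>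
        (\<Sum>m=i..j. d \<xi> (node R m)) \<le> C + (\<Sum>m=i..j. C * ybar \<xi> (node R m)))
     \<longleftrightarrow> (\<forall>i j. 1 \<le> i \<and> i \<le> j \<and> j \<le> length R \<longrightarrow>
        (\<Sum>v\<in>subroute_set R i j. ybar \<xi> v) \<ge> (\<Sum>v\<in>subroute_set R i j. d \<xi> v) / C - 1)"
    using \<open>distinct R\<close> by (simp add: sum_subroute_set)
  show ?thesis
    unfolding arc_flow_iff_path_flow[OF route depot, of "d \<xi>" C "\<lambda>v. C * ybar \<xi> v"]
      path_flow_iff_segment_bound[OF C_nonneg d_route_nonneg c_route_nonneg]
      segment_bound_iff ..
qed

end
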